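(* In the $xy$-plane, let an observer be at $(\cos\theta,\sin\theta)$ and let $\Omega(\theta)$ be the angle subtended at the observer by the segment $\{0\}\times[-1/2,1/2]$. Then $\Omega(\theta)=\arctan\!\big(\tfrac43|\cos\theta|\big)$, and if $\theta$ is uniformly distributed on $[0,2\pi)$, $$\mathbb{E}(\Omega)=\frac{1}{3\pi}\Big[\pi^2-6\ln(2)^2-3\,\mathrm{Li}_2\!\big(\tfrac14\big)\Big],\qquad \mathbb{E}(\Omega^2)=\mathrm{Li}_2\!\big(\tfrac14\big)-\mathrm{Li}_2\!\big(-\tfrac14\big),$$ and $\Omega$ has probability density function $$\frac{6}{\pi}\,\frac{1}{\cos(\omega)^2\sqrt{16-9\tan(\omega)^2}},\qquad 0<\omega<2\arctan\!\big(\tfrac12\big).$$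
   Context: $\mathrm{Li}_2(\xi)=\sum_{k\ge1}\xi^k/k^2$ is the dilogarithm. The angle subtended at a point $P$ by a segment $[U,V]$ is the angle $\angle UPV\in[0,\pi]$. *)

theory Defs
  imports "HOL-Probability.Probability"
begin

definition Li2 :: "real \<Rightarrow> real" where
  "Li2 \<xi> = (\<Sum>k. \<xi> ^ (k+1) / (real (k+1))^2)"

definition subtended_angle :: "real \<times> real \<Rightarrow> real \<times> real \<Rightarrow> real \<times> real \<Rightarrow> real" where
  "subtended_angle P U V =
     arccos (((U - P) \<bullet> (V - P)) / (norm (U - P) * norm (V - P)))"

definition Omega :: "real \<Rightarrow> real" where
  "Omega \<theta> = subtended_angle (cos \<theta>, sin \<theta>) (0, -1/2) (0, 1/2)"

definition theta_space :: "real measure" where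
  "theta_space = uniform_measure lborel {0..<2*pi}"

end

theory Submission
  imports Defs "HOL-Real_Asymp.Real_Asymp"
begin

text \<open>
  Seen from \<open>(cos \<theta>, sin \<theta>)\<close>, the endpoints of the segment have inner product \<open>3/4\<close> and
  distances \<open>sqrt (5/4 \<plusminus> sin \<theta>)\<close>, whence \<open>\<Omega> \<theta> = arctan (4/3 \<bar>cos \<theta>\<bar>)\<close>. Since
  \<open>arctan (4/3 cos \<theta>) = 2 Re (Arctan (cis \<theta> / 2))\<close>, the power series of \<open>Arctan\<close> gives the
  Fourier series \<open>\<Sum>k. 2 (-1)^k / ((2k+1) 2^(2k+1)) cos ((2k+1) \<theta>)\<close>. Integrating it termwise,
  against itself for \<open>\<Omega>\<^sup>2\<close> and against the sign of \<open>cos \<theta>\<close> for \<open>\<Omega>\<close>, produces sums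
  \<open>\<Sum>k. x^(2k+1) / (2k+1)^2 = (Li2 x - Li2 (-x)) / 2\<close>, which Euler's reflection formula and the
  duplication formula for \<open>Li2\<close> evaluate. For the density: \<open>\<Omega> \<theta> > x\<close> holds exactly when
  \<open>\<bar>cos \<theta>\<bar> > 3/4 tan x\<close>, a set of relative length \<open>2/\<pi> arccos (3/4 tan x)\<close>, and this tail is the
  integral of the stated density over \<open>(x, arctan (4/3))\<close>, where \<open>arctan (4/3) = 2 arctan (1/2)\<close>.
\<close>

section \<open>The dilogarithm\<close>

lemma Li2_sums:
  assumes "\<bar>x\<bar> \<le> 1"
  shows "(\<lambda>k. x^(k+1) / (real (k+1))^2) sums Li2 x"
proof -
  have "summable (\<lambda>k. x^(k+1) / (real (k+1))^2)"
  proof (rule summable_comparison_test)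
    show "summable (\<lambda>k. 1 / (real (k+1))^2)"
      using inverse_squares_sums by (simp add: sums_iff)
    have "\<bar>x^(k+1)\<bar> \<le> 1" for k
      using assms by (metis power_abs power_le_one abs_ge_zero)
    then show "\<exists>N. \<forall>k\<ge>N. norm (x^(k+1) / (real (k+1))^2) \<le> 1 / (real (k+1))^2"
      by (simp add: abs_divide divide_right_mono del: of_nat_Suc)
  qed
  then show ?thesis
    unfolding Li2_def by (rule summable_sums)
qed

lemma Li2_zero [simp]: "Li2 0 = 0"
  by (simp add: Li2_def)

lemma Li2_one: "Li2 1 = pi^2 / 6"
  using inverse_squares_sums Li2_sums[of 1] by (simp add: sums_iff)

lemma Li2_continuous_on: "continuous_on {-1..1} Li2"
proof -
  have lim: "uniform_limit {-1..1} (\<lambda>n x. \<Sum>k<n. x^(k+1) / (real (k+1))^2)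
      (\<lambda>x. \<Sum>k. x^(k+1) / (real (k+1))^2) sequentially"
  proof (rule Weierstrass_m_test)
    show "summable (\<lambda>k. 1 / (real (k+1))^2)"
      using inverse_squares_sums by (simp add: sums_iff)
    fix k and x :: real
    assume "x \<in> {-1..1}"
    then have "\<bar>x^(k+1)\<bar> \<le> 1"
      by (metis power_abs power_le_one abs_ge_zero abs_le_iff atLeastAtMost_iff minus_le_iff)
    then show "norm (x^(k+1) / (real (k+1))^2) \<le> 1 / (real (k+1))^2"
      by (simp add: abs_divide divide_right_mono del: of_nat_Suc power_Suc)
  qed
  show ?thesis
    unfolding Li2_def
    by (rule uniform_limit_theorem[OF _ lim]) (auto intro!: always_eventually continuous_intros)
qed

lemma power_div_Suc_sums:
  fixes x :: real
  assumes "\<bar>x\<bar> < 1" "x \<noteq> 0"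
  shows "(\<lambda>n. x^n / real (n+1)) sums (- ln (1 - x) / x)"
proof -
  have "(\<lambda>n. - (x^n) / real n) sums ln (1 - x)"
    using ln_series'[of "-x"] assms by simp
  then have "(\<lambda>n. - (x^Suc n) / real (Suc n)) sums ln (1 - x)"
    by (subst sums_Suc_iff) simp
  then have "(\<lambda>n. - (x^Suc n) / real (Suc n) / (- x)) sums (ln (1 - x) / (- x))"
    by (rule sums_divide)
  moreover have "- (x^Suc n) / real (Suc n) / (- x) = x^n / real (n+1)" for n
    using assms by simp
  ultimately show ?thesis
    by simp
qed

lemma Li2_has_real_derivative:
  assumes "\<bar>x\<bar> < 1" "x \<noteq> 0"
  shows "(Li2 has_real_derivative - ln (1 - x) / x) (at x)"
proof -
  define c :: "nat \<Rightarrow> real" where "c n = (if n = 0 then 0 else 1 / (real n)^2)" for n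
  have c_sums: "(\<lambda>n. c n * y^n) sums Li2 y" if "\<bar>y\<bar> \<le> 1" for y
    using Li2_sums[OF that] sums_Suc_iff[of "\<lambda>n. c n * y^n" "Li2 y"]
    by (simp add: c_def field_simps)
  have "diffs c n * x^n = x^n / real (n+1)" for n
    by (simp add: diffs_def c_def power2_eq_square del: of_nat_Suc)
  then have "(\<Sum>n. diffs c n * x^n) = - ln (1 - x) / x"
    using power_div_Suc_sums[OF assms] by (simp add: sums_iff)
  moreover have "((\<lambda>y. \<Sum>n. c n * y^n) has_real_derivative (\<Sum>n. diffs c n * x^n)) (at x)"
    by (rule termdiffs_strong[where K = 1]) (use c_sums[of 1] assms in \<open>auto simp: sums_iff\<close>)
  ultimately have "((\<lambda>y. \<Sum>n. c n * y^n) has_real_derivative - ln (1 - x) / x) (at x)"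
    by simp
  then show ?thesis
  proof (rule has_field_derivative_transform_within_open[where S = "{-1<..<1}"])
    show "(\<Sum>n. c n * y^n) = Li2 y" if "y \<in> {-1<..<1}" for y
      using c_sums[of y] that by (simp add: sums_iff abs_le_iff)
  qed (use assms in auto)
qed

lemma Li2_reflection:
  assumes "0 < x" "x < 1"
  shows "Li2 x + Li2 (1 - x) = pi^2 / 6 - ln x * ln (1 - x)"
proof -
  define F where "F x = Li2 x + Li2 (1 - x) + ln x * ln (1 - x)" for x
  have "\<exists>c. \<forall>x\<in>{0<..<1}. F x = c"
  proof (rule has_field_derivative_zero_constant)
    fix x :: real
    assume x: "x \<in> {0<..<1}"
    have "(F has_real_derivative - ln (1 - x) / x + (- ln (1 - (1 - x)) / (1 - x)) * (-1)
          + ((1 / x) * ln (1 - x) + ln x * (-1 / (1 - x)))) (at x)"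
      unfolding F_def using x
      by (auto intro!: derivative_eq_intros DERIV_chain2[OF Li2_has_real_derivative]
          Li2_has_real_derivative)
    then show "(F has_real_derivative 0) (at x within {0<..<1})"
      by (auto intro: has_field_derivative_at_within simp: field_simps)
  qed auto
  then obtain c where c: "\<And>x. x \<in> {0<..<1} \<Longrightarrow> F x = c"
    by blast
  have "(F \<longlongrightarrow> Li2 0 + Li2 (1 - 0) + 0) (at_right 0)"
    unfolding F_def
  proof (intro tendsto_add)
    show "(Li2 \<longlongrightarrow> Li2 0) (at_right 0)" "((\<lambda>x. Li2 (1 - x)) \<longlongrightarrow> Li2 (1 - 0)) (at_right 0)"
      by (rule continuous_on_tendsto_compose[OF Li2_continuous_on];
          auto intro!: eventually_at_rightI[where b = 1] tendsto_eq_intros)+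
    show "((\<lambda>x::real. ln x * ln (1 - x)) \<longlongrightarrow> 0) (at_right 0)"
      by real_asymp
  qed
  moreover have "eventually (\<lambda>x. F x = c) (at_right 0)"
    by (rule eventually_at_rightI[where b = 1]) (auto intro: c)
  ultimately have "((\<lambda>_. c) \<longlongrightarrow> Li2 1) (at_right (0::real))"
    using tendsto_cong by fastforce
  then have "c = pi^2 / 6"
    using Li2_one tendsto_const_iff trivial_limit_at_right_real by metis
  then show ?thesis
    using c[of x] assms by (simp add: F_def)
qed

lemma Li2_one_half: "Li2 (1/2) = pi^2 / 12 - (ln 2)^2 / 2"
  using Li2_reflection[of "1/2"] by (simp add: ln_div power2_eq_square)

text \<open>Grouping the terms of the series of \<open>Li2 x\<close> in pairs, the even ones sum to \<open>Li2 (x\<^sup>2) / 4\<close>.\<close>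

lemma Li2_odd_terms_sums_Li2_square:
  assumes "\<bar>x\<bar> \<le> 1"
  shows "(\<lambda>k. x^(2*k+1) / (real (2*k+1))^2) sums (Li2 x - Li2 (x^2) / 4)"
proof -
  define f where "f n = x^(n+1) / (real (n+1))^2" for n
  have "f (2*n+1) = (x^2)^(n+1) / (real (n+1))^2 / 4" for n
  proof -
    have "x^(2*n+1+1) = (x^2)^(n+1)"
      unfolding power_mult[symmetric] by (simp add: algebra_simps)
    moreover have "(real (2*n+1+1))^2 = 4 * (real (n+1))^2"
      by (simp add: power2_eq_square algebra_simps)
    ultimately show ?thesis by (simp add: f_def)
  qed
  then have "sum f {n*2..<n*2+2} = x^(2*n+1) / (real (2*n+1))^2 + (x^2)^(n+1) / (real (n+1))^2 / 4" for n
    by (simp add: f_def numeral_2_eq_2 mult.commute)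
  then have "(\<lambda>n. x^(2*n+1) / (real (2*n+1))^2 + (x^2)^(n+1) / (real (n+1))^2 / 4) sums Li2 x"
    using sums_group[OF Li2_sums[OF assms, folded f_def], of 2] by simp
  moreover have "(\<lambda>n. (x^2)^(n+1) / (real (n+1))^2 / 4) sums (Li2 (x^2) / 4)"
    by (rule sums_divide[OF Li2_sums]) (use assms abs_le_square_iff[of x 1] in simp)
  ultimately show ?thesis
    using sums_diff by fastforce
qed

lemma Li2_duplication:
  assumes "\<bar>x\<bar> \<le> 1"
  shows "Li2 x + Li2 (-x) = Li2 (x^2) / 2"
proof -
  have "(\<lambda>k. - (x^(2*k+1) / (real (2*k+1))^2)) sums (Li2 (-x) - Li2 (x^2) / 4)"
    using Li2_odd_terms_sums_Li2_square[of "-x"] assms by simp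
  then have "(\<lambda>k. x^(2*k+1) / (real (2*k+1))^2) sums (Li2 (x^2) / 4 - Li2 (-x))"
    using sums_minus by fastforce
  with Li2_odd_terms_sums_Li2_square[OF assms] show ?thesis
    using sums_unique2 by fastforce
qed

lemma Li2_odd_terms_sums:
  assumes "\<bar>x\<bar> \<le> 1"
  shows "(\<lambda>k. x^(2*k+1) / (real (2*k+1))^2) sums ((Li2 x - Li2 (-x)) / 2)"
proof -
  have "Li2 x - Li2 (x^2) / 4 = (Li2 x - Li2 (-x)) / 2"
    using Li2_duplication[OF assms] by simp
  with Li2_odd_terms_sums_Li2_square[OF assms] show ?thesis
    by (simp only:)
qed

lemma has_integral_suminf:
  fixes f :: "nat \<Rightarrow> real \<Rightarrow> real"
  assumes "a \<le> b"
    and sums: "\<And>x. x \<in> {a..b} \<Longrightarrow> (\<lambda>k. f k x) sums h x"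
    and bound: "\<And>k x. x \<in> {a..b} \<Longrightarrow> \<bar>f k x\<bar> \<le> M k" and "summable M"
    and cont: "\<And>k. continuous_on {a..b} (f k)"
    and int: "\<And>k. (f k has_integral I k) {a..b}"
  shows "(h has_integral (\<Sum>k. I k)) {a..b}"
proof -
  have "uniform_limit {a..b} (\<lambda>n x. \<Sum>k<n. f k x) (\<lambda>x. \<Sum>k. f k x) sequentially"
    by (rule Weierstrass_m_test) (use bound \<open>summable M\<close> in auto)
  then have lim_h: "uniform_limit {a..b} (\<lambda>n x. \<Sum>k<n. f k x) h sequentially"
    by (rule uniform_limit_cong'[THEN iffD1, rotated -1]) (use sums in \<open>auto simp: sums_iff\<close>)
  have "continuous_on {a..b} (\<lambda>x. \<Sum>k<n. f k x)" for n
    using cont by (intro continuous_intros) auto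
  then obtain I' J where I': "\<And>n. ((\<lambda>x. \<Sum>k<n. f k x) has_integral I' n) {a..b}"
    and J: "(h has_integral J) {a..b}" and lim: "I' \<longlonglongrightarrow> J"
    using uniform_limit_integral[OF lim_h] by auto
  have "I' n = (\<Sum>k<n. I k)" for n
    using has_integral_unique[OF I'[of n] has_integral_sum[OF _ int, of "{..<n}"]] by simp
  then have "I' = (\<lambda>n. \<Sum>k<n. I k)" ..
  then have "I sums J"
    using lim unfolding sums_def by simp
  with J show ?thesis
    by (simp add: sums_iff)
qed

lemma cos_has_integral:
  fixes a b m :: real
  assumes "a \<le> b" "m \<noteq> 0"
  shows "((\<lambda>x. cos (m * x)) has_integral (sin (m * b) - sin (m * a)) / m) {a..b}"
proof -
  have "((\<lambda>x. cos (m * x)) has_integral (sin (m * b) / m - sin (m * a) / m)) {a..b}"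
  proof (rule fundamental_theorem_of_calculus)
    show "((\<lambda>x. sin (m * x) / m) has_vector_derivative cos (m * x)) (at x within {a..b})" for x
      using assms unfolding has_vector_derivative_def
      by (intro derivative_eq_intros | force)+
  qed (use assms in auto)
  then show ?thesis
    by (simp add: diff_divide_distrib)
qed

lemma sin_int_mult_2pi: "sin (of_int j * (2 * pi)) = 0"
  using sin_npi_int[of "2 * j"] by (simp add: mult_ac)

lemma cos_mult_cos_has_integral:
  fixes m n :: nat
  assumes "0 < m" "0 < n"
  shows "((\<lambda>x. cos (real m * x) * cos (real n * x)) has_integral (if m = n then pi else 0)) {0..2*pi}"
proof -
  have product: "cos (real m * x) * cos (real n * x) = cos ((real m - real n) * x) / 2 + cos ((real m + real n) * x) / 2" for x
    using cos_times_cos[of "real m * x" "real n * x"] by (simp add: algebra_simps)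
  have periodic: "((\<lambda>x. cos (real_of_int j * x)) has_integral 0) {0..2*pi}" if "j \<noteq> 0" for j
    using cos_has_integral[of 0 "2 * pi" "real_of_int j"] sin_int_mult_2pi[of j] that by simp
  have plus: "((\<lambda>x. cos ((real m + real n) * x)) has_integral 0) {0..2*pi}"
    using periodic[of "int m + int n"] assms by simp
  have minus: "((\<lambda>x. cos ((real m - real n) * x)) has_integral (if m = n then 2 * pi else 0)) {0..2*pi}"
  proof (cases "m = n")
    case True
    then show ?thesis
      using has_integral_const_real[of "1::real" 0 "2 * pi"] by simp
  qed (use periodic[of "int m - int n"] in simp)
  have "(if m = n then 2 * pi else 0) / 2 + 0 / 2 = (if m = n then pi else 0)"
    by simp
  then show ?thesis
    using has_integral_add[OF has_integral_divide[OF minus] has_integral_divide[OF plus], of 2 2]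
    by (simp only: product)
qed

lemma integral_uniform_measure_real:
  fixes f :: "real \<Rightarrow> real"
  assumes "a < b" and f: "f \<in> borel_measurable borel" "\<And>x. 0 \<le> f x"
    and I: "(f has_integral I) {a..b}"
  shows "integral\<^sup>L (uniform_measure lborel {a..<b}) f = I / (b - a)"
proof -
  have "0 \<le> I"
    using has_integral_nonneg[OF I] f by blast
  have "(f has_integral I) {a..<b}"
  proof (rule has_integral_spike_set_eq[THEN iffD1, OF _ _ I])
    show "negligible {x \<in> {a..b} - {a..<b}. f x \<noteq> 0}"
      by (rule negligible_subset[of "{b}"]) auto
    show "negligible {x \<in> {a..<b} - {a..b}. f x \<noteq> 0}"
      by (rule negligible_subset[of "{}"]) auto
  qed
  moreover have "(\<lambda>x. if x \<in> {a..<b} then f x else 0) = (\<lambda>x. f x * indicator {a..<b} x)"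
    by (auto simp: indicator_def)
  ultimately have "((\<lambda>x. f x * indicator {a..<b} x) has_integral I) UNIV"
    using has_integral_restrict_UNIV by metis
  then have "(\<integral>\<^sup>+x. ennreal (f x * indicator {a..<b} x) \<partial>lborel) = ennreal I"
    by (rule nn_integral_has_integral_lborel[rotated 2]) (use f in auto)
  also have "(\<integral>\<^sup>+x. ennreal (f x * indicator {a..<b} x) \<partial>lborel)
      = (\<integral>\<^sup>+x. ennreal (f x) * indicator {a..<b} x \<partial>lborel)"
    by (rule nn_integral_cong) (auto simp: indicator_def)
  finally have nn: "(\<integral>\<^sup>+x. ennreal (f x) \<partial>uniform_measure lborel {a..<b}) = ennreal I / ennreal (b - a)"
    using f(1) \<open>a < b\<close> by (subst nn_integral_uniform_measure) auto
  have "f \<in> borel_measurable (uniform_measure lborel {a..<b})"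
    using f(1) by (simp add: measurable_cong_sets[OF sets_uniform_measure refl])
  then have "integral\<^sup>L (uniform_measure lborel {a..<b}) f = enn2real (ennreal I / ennreal (b - a))"
    using f(2) nn by (subst integral_eq_nn_integral) auto
  also have "\<dots> = I / (b - a)"
    using \<open>0 \<le> I\<close> \<open>a < b\<close> by (simp add: divide_ennreal)
  finally show ?thesis .
qed

section \<open>A Fourier series of arctan\<close>

definition arctan_cos :: "real \<Rightarrow> real \<Rightarrow> real" where
  "arctan_cos r t = arctan (2 * r * cos t / (1 - r^2))"

definition arctan_cos_coeff :: "real \<Rightarrow> nat \<Rightarrow> real" where
  "arctan_cos_coeff r k = 2 * (-1)^k * r^(2*k+1) / real (2*k+1)"

lemma Re_Arctan_cis:
  assumes "\<bar>r\<bar> < 1"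
  shows "2 * Re (Arctan (complex_of_real r * cis t)) = arctan_cos r t"
proof -
  define x where "x = r * cos t"
  define y where "y = r * sin t"
  have xy: "x^2 + y^2 = r^2"
    unfolding x_def y_def by (simp add: power_mult_distrib flip: distrib_left)
  have r2: "r^2 < 1"
    using assms by (simp add: abs_square_less_1)
  define a where "a = Complex (1 + y) (- x)"
  define b where "b = Complex (1 - y) x"
  have z: "complex_of_real r * cis t = Complex x y"
    by (simp add: x_def y_def complex_eq_iff)
  have "1 - \<i> * Complex x y = a" "1 + \<i> * Complex x y = b"
    by (simp_all add: a_def b_def complex_eq_iff)
  then have quotient: "(1 - \<i> * (complex_of_real r * cis t)) / (1 + \<i> * (complex_of_real r * cis t)) = a / b"
    unfolding z by simp
  have "b \<noteq> 0"
  proof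
    assume "b = 0"
    then have "y = 1" "x = 0" by (auto simp: b_def complex_eq_iff)
    with xy r2 show False by simp
  qed
  then have nb: "(cmod b)^2 > 0" by simp
  have "Re a * Re b + Im a * Im b = 1 - r^2"
    using xy by (simp add: a_def b_def power2_eq_square algebra_simps)
  then have re: "Re (a / b) = (1 - r^2) / (cmod b)^2"
    unfolding Re_divide cmod_power2 by simp
  have im: "Im (a / b) = - 2 * x / (cmod b)^2"
    by (simp add: Im_divide cmod_power2 a_def b_def algebra_simps)
  have re_pos: "Re (a / b) > 0"
    using re nb r2 by simp
  then have "Im (Ln (a / b)) = arctan (Im (a / b) / Re (a / b))"
    using Arg_eq_Im_Ln arg_conv_arctan by (metis less_irrefl zero_complex.sel(1))
  also have "Im (a / b) / Re (a / b) = - (2 * r * cos t / (1 - r^2))"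
    using nb r2 unfolding re im x_def by (simp add: field_simps)
  finally have "Im (Ln (a / b)) = - arctan (2 * r * cos t / (1 - r^2))"
    by (simp add: arctan_minus)
  then show ?thesis
    unfolding Arctan_def quotient arctan_cos_def by simp
qed

lemma arctan_cos_sums:
  assumes "\<bar>r\<bar> < 1"
  shows "(\<lambda>k. arctan_cos_coeff r k * cos (real (2*k+1) * t)) sums arctan_cos r t"
proof -
  define z where "z = complex_of_real r * cis t"
  have "norm z < 1"
    using assms by (simp add: z_def norm_mult)
  then have "(\<lambda>k. Re ((-1)^k / of_nat (2*k+1) * z^(2*k+1))) sums Re (Arctan z)"
    using Arctan_series(2) by (intro sums_Re) simp
  then have "(\<lambda>k. 2 * Re ((-1)^k / of_nat (2*k+1) * z^(2*k+1))) sums (2 * Re (Arctan z))"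
    by (rule sums_mult)
  moreover have "2 * Re ((-1)^k / of_nat (2*k+1) * z^(2*k+1)) = arctan_cos_coeff r k * cos (real (2*k+1) * t)" for k
  proof -
    have "z^(2*k+1) = complex_of_real (r^(2*k+1)) * cis (real (2*k+1) * t)"
      unfolding z_def by (simp only: power_mult_distrib of_real_power Complex.DeMoivre)
    then show ?thesis
      by (simp add: arctan_cos_coeff_def)
  qed
  ultimately show ?thesis
    using Re_Arctan_cis[OF assms] by (simp add: z_def)
qed

lemma abs_arctan_cos_coeff_le: "\<bar>r\<bar> \<le> 1 \<Longrightarrow> \<bar>arctan_cos_coeff r k\<bar> \<le> 2 * \<bar>r\<bar>^k"
proof -
  assume r: "\<bar>r\<bar> \<le> 1"
  have "\<bar>arctan_cos_coeff r k\<bar> = 2 * \<bar>r\<bar>^(2*k+1) / real (2*k+1)"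
    by (simp add: arctan_cos_coeff_def abs_mult power_abs)
  also have "\<dots> \<le> 2 * \<bar>r\<bar>^(2*k+1) / 1"
    by (rule divide_left_mono) auto
  also have "\<dots> \<le> 2 * \<bar>r\<bar>^k"
    using r power_decreasing[of k "2*k+1" "\<bar>r\<bar>"] by simp
  finally show ?thesis .
qed

lemma summable_abs_arctan_cos_coeff: "\<bar>r\<bar> < 1 \<Longrightarrow> summable (\<lambda>k. \<bar>arctan_cos_coeff r k\<bar>)"
  by (rule summable_comparison_test[OF _ summable_mult[OF summable_geometric[of "\<bar>r\<bar>"], of 2]])
     (auto intro!: abs_arctan_cos_coeff_le)

text \<open>No hypothesis on \<open>r\<close>: for \<open>r\<^sup>2 = 1\<close> the quotient is \<open>0\<close> by the convention \<open>x / 0 = 0\<close>.\<close>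

lemma continuous_on_arctan_cos [continuous_intros]: "continuous_on S (arctan_cos r)"
  unfolding arctan_cos_def divide_inverse by (intro continuous_intros)

lemma abs_arctan_cos_le: "\<bar>arctan_cos r t\<bar> \<le> 2"
  using arctan_bounded[of "2 * r * cos t / (1 - r^2)"] pi_less_4 unfolding arctan_cos_def by linarith

definition arctan_cos_primitive :: "real \<Rightarrow> real \<Rightarrow> real" where
  "arctan_cos_primitive r x = (\<Sum>k. arctan_cos_coeff r k * sin (real (2*k+1) * x) / real (2*k+1))"

lemma arctan_cos_has_integral:
  assumes "\<bar>r\<bar> < 1" "a \<le> b"
  shows "(arctan_cos r has_integral (arctan_cos_primitive r b - arctan_cos_primitive r a)) {a..b}"
proof -
  define s where "s x k = arctan_cos_coeff r k * sin (real (2*k+1) * x) / real (2*k+1)" for x k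
  have "summable (s x)" for x
  proof (rule summable_comparison_test[OF _ summable_abs_arctan_cos_coeff[OF assms(1)]])
    have "\<bar>s x k\<bar> \<le> \<bar>arctan_cos_coeff r k\<bar> * 1 / 1" for k
      unfolding s_def abs_divide abs_mult
      by (intro divide_mono mult_left_mono) auto
    then show "\<exists>N. \<forall>k\<ge>N. norm (s x k) \<le> \<bar>arctan_cos_coeff r k\<bar>"
      by simp
  qed
  then have "(\<lambda>k. s b k - s a k) sums (arctan_cos_primitive r b - arctan_cos_primitive r a)"
    unfolding arctan_cos_primitive_def s_def by (intro sums_diff summable_sums)
  moreover have "(arctan_cos r has_integral (\<Sum>k. s b k - s a k)) {a..b}"
  proof (rule has_integral_suminf[where f = "\<lambda>k t. arctan_cos_coeff r k * cos (real (2*k+1) * t)"])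
    show "((\<lambda>t. arctan_cos_coeff r k * cos (real (2*k+1) * t)) has_integral s b k - s a k) {a..b}" for k
      using has_integral_mult_right[OF cos_has_integral[OF assms(2), of "real (2*k+1)"], of "arctan_cos_coeff r k"]
      by (simp add: s_def diff_divide_distrib right_diff_distrib)
    show "\<bar>arctan_cos_coeff r k * cos (real (2*k+1) * t)\<bar> \<le> \<bar>arctan_cos_coeff r k\<bar>" for k t
      by (simp add: abs_mult mult_left_le)
  qed (use assms arctan_cos_sums summable_abs_arctan_cos_coeff in \<open>auto intro!: continuous_intros\<close>)
  ultimately show ?thesis
    by (simp add: sums_iff)
qed

lemma arctan_cos_mult_cos_has_integral:
  assumes "\<bar>r\<bar> < 1"
  shows "((\<lambda>t. arctan_cos r t * cos (real (2*k+1) * t)) has_integral pi * arctan_cos_coeff r k) {0..2*pi}"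
proof -
  have "((\<lambda>t. arctan_cos r t * cos (real (2*k+1) * t)) has_integral
      (\<Sum>j. arctan_cos_coeff r j * (if j = k then pi else 0))) {0..2*pi}"
  proof (rule has_integral_suminf[where f = "\<lambda>j t. arctan_cos_coeff r j * cos (real (2*j+1) * t) * cos (real (2*k+1) * t)"])
    show "((\<lambda>t. arctan_cos_coeff r j * cos (real (2*j+1) * t) * cos (real (2*k+1) * t)) has_integral
        arctan_cos_coeff r j * (if j = k then pi else 0)) {0..2*pi}" for j
      using has_integral_mult_right[OF cos_mult_cos_has_integral[of "2*j+1" "2*k+1"], of "arctan_cos_coeff r j"]
      by (simp add: mult.assoc)
    show "\<bar>arctan_cos_coeff r j * cos (real (2*j+1) * t) * cos (real (2*k+1) * t)\<bar> \<le> \<bar>arctan_cos_coeff r j\<bar>" for j t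
      by (simp add: abs_mult mult_left_le mult_le_one mult.assoc)
    show "(\<lambda>j. arctan_cos_coeff r j * cos (real (2*j+1) * t) * cos (real (2*k+1) * t)) sums
        (arctan_cos r t * cos (real (2*k+1) * t))" for t
      using sums_mult2[OF arctan_cos_sums[OF assms]] .
  qed (use assms summable_abs_arctan_cos_coeff in \<open>auto intro!: continuous_intros\<close>)
  moreover have "(\<lambda>j. arctan_cos_coeff r j * (if j = k then pi else 0)) sums (pi * arctan_cos_coeff r k)"
    using sums_single[of k "\<lambda>_. pi * arctan_cos_coeff r k"] by (simp add: if_distrib mult.commute cong: if_cong)
  ultimately show ?thesis
    by (simp add: sums_iff)
qed

lemma arctan_cos_squared_has_integral:
  assumes "\<bar>r\<bar> < 1"
  shows "((\<lambda>t. (arctan_cos r t)^2) has_integral 2 * pi * (Li2 (r^2) - Li2 (- (r^2)))) {0..2*pi}"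
proof -
  have "((\<lambda>t. arctan_cos r t * arctan_cos r t) has_integral
      (\<Sum>k. arctan_cos_coeff r k * (pi * arctan_cos_coeff r k))) {0..2*pi}"
  proof (rule has_integral_suminf[where f = "\<lambda>k t. arctan_cos_coeff r k * (arctan_cos r t * cos (real (2*k+1) * t))"
        and M = "\<lambda>k. 2 * \<bar>arctan_cos_coeff r k\<bar>"])
    show "(\<lambda>k. arctan_cos_coeff r k * (arctan_cos r t * cos (real (2*k+1) * t))) sums
        (arctan_cos r t * arctan_cos r t)" for t
      using sums_mult[OF arctan_cos_sums[OF assms], of "arctan_cos r t"] by (simp add: mult_ac)
    show "\<bar>arctan_cos_coeff r k * (arctan_cos r t * cos (real (2*k+1) * t))\<bar> \<le> 2 * \<bar>arctan_cos_coeff r k\<bar>" for k t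
    proof -
      have "\<bar>arctan_cos r t\<bar> * \<bar>cos (real (2*k+1) * t)\<bar> \<le> 2 * 1"
        by (rule mult_mono) (auto simp: abs_arctan_cos_le)
      then have "\<bar>arctan_cos_coeff r k\<bar> * (\<bar>arctan_cos r t\<bar> * \<bar>cos (real (2*k+1) * t)\<bar>)
          \<le> \<bar>arctan_cos_coeff r k\<bar> * 2"
        by (intro mult_left_mono) auto
      then show ?thesis
        by (simp add: abs_mult mult.commute)
    qed
    show "((\<lambda>t. arctan_cos_coeff r k * (arctan_cos r t * cos (real (2*k+1) * t))) has_integral
        arctan_cos_coeff r k * (pi * arctan_cos_coeff r k)) {0..2*pi}" for k
      by (rule has_integral_mult_right[OF arctan_cos_mult_cos_has_integral[OF assms]])
  qed (use assms summable_abs_arctan_cos_coeff in \<open>auto intro!: continuous_intros summable_mult\<close>)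
  moreover have "(\<lambda>k. arctan_cos_coeff r k * (pi * arctan_cos_coeff r k)) sums
      (2 * pi * (Li2 (r^2) - Li2 (- (r^2))))"
  proof -
    have "arctan_cos_coeff r k * (pi * arctan_cos_coeff r k) = 4 * pi * ((r^2)^(2*k+1) / (real (2*k+1))^2)" for k
      by (simp add: arctan_cos_coeff_def power2_eq_square power_mult_distrib field_simps
          flip: power_add)
    moreover have "\<bar>r^2\<bar> \<le> 1"
      using assms by (simp add: abs_square_le_1)
    ultimately show ?thesis
      using sums_mult[OF Li2_odd_terms_sums, of "r^2" "4 * pi"] by (simp add: mult.assoc)
  qed
  ultimately show ?thesis
    by (simp add: sums_iff power2_eq_square)
qed

lemma sin_odd_mult_pi_half: "sin (real (2*k+1) * (pi/2)) = (-1)^k"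
proof -
  have "real (2*k+1) * (pi/2) = real k * pi + pi/2"
    by (simp add: algebra_simps)
  then show ?thesis
    by (simp only: sin_add sin_npi cos_npi sin_pi_half cos_pi_half mult_1_right mult_zero_right add_0_right)
qed

lemma sin_odd_mult_3pi_half: "sin (real (2*k+1) * (3*pi/2)) = - ((-1)^k)"
proof -
  have "real (2*k+1) * (3*pi/2) = real (3*k+1) * pi + pi/2"
    by (simp add: algebra_simps)
  then have "sin (real (2*k+1) * (3*pi/2)) = (-1)^(3*k+1)"
    by (simp only: sin_add cos_npi) simp
  then show ?thesis
    by (simp add: power_add power_mult)
qed

lemma arctan_cos_primitive_0 [simp]: "arctan_cos_primitive r 0 = 0"
  by (simp add: arctan_cos_primitive_def)

lemma arctan_cos_primitive_2pi: "arctan_cos_primitive r (2*pi) = 0"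
proof -
  have "sin (real (2*k+1) * (2*pi)) = 0" for k
    using sin_int_mult_2pi[of "int (2*k+1)"] by simp
  then show ?thesis
    by (simp add: arctan_cos_primitive_def)
qed

lemma arctan_cos_primitive_pi_half:
  assumes "\<bar>r\<bar> \<le> 1"
  shows "arctan_cos_primitive r (pi/2) = Li2 r - Li2 (-r)"
proof -
  have "arctan_cos_coeff r k * sin (real (2*k+1) * (pi/2)) / real (2*k+1)
      = 2 * (r^(2*k+1) / (real (2*k+1))^2)" for k
    unfolding sin_odd_mult_pi_half by (simp add: arctan_cos_coeff_def power2_eq_square flip: power_add)
  then show ?thesis
    using sums_mult[OF Li2_odd_terms_sums[OF assms], of 2]
    by (simp add: arctan_cos_primitive_def sums_iff)
qed

lemma arctan_cos_primitive_3pi_half: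
  assumes "\<bar>r\<bar> \<le> 1"
  shows "arctan_cos_primitive r (3*pi/2) = - (Li2 r - Li2 (-r))"
proof -
  have "arctan_cos_coeff r k * sin (real (2*k+1) * (3*pi/2)) / real (2*k+1)
      = -2 * (r^(2*k+1) / (real (2*k+1))^2)" for k
    unfolding sin_odd_mult_3pi_half by (simp add: arctan_cos_coeff_def power2_eq_square flip: power_add)
  then show ?thesis
    using sums_mult[OF Li2_odd_terms_sums[OF assms], of "-2"]
    by (simp add: arctan_cos_primitive_def sums_iff)
qed

lemma abs_arctan_cos_has_integral:
  assumes "0 \<le> r" "r < 1"
  shows "((\<lambda>t. \<bar>arctan_cos r t\<bar>) has_integral 4 * (Li2 r - Li2 (-r))) {0..2*pi}"
proof -
  define P where "P = arctan_cos_primitive r"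
  define L where "L = Li2 r - Li2 (-r)"
  have r: "\<bar>r\<bar> < 1" "\<bar>r\<bar> \<le> 1"
    using assms by auto
  have den: "0 < 1 - r^2"
    using r by (simp add: abs_square_less_1)
  have pos: "\<bar>arctan_cos r t\<bar> = arctan_cos r t" if "0 \<le> cos t" for t
    using that assms den by (simp add: arctan_cos_def zero_le_arctan_iff)
  have neg: "\<bar>arctan_cos r t\<bar> = - arctan_cos r t" if "cos t \<le> 0" for t
    using that assms den by (simp add: arctan_cos_def arctan_le_zero_iff mult_nonneg_nonpos divide_nonpos_pos)
  have I1: "((\<lambda>t. \<bar>arctan_cos r t\<bar>) has_integral P (pi/2) - P 0) {0..pi/2}"
    by (rule has_integral_eq[OF _ arctan_cos_has_integral[OF r(1)], folded P_def])
      (auto intro!: pos[symmetric] cos_ge_zero)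
  have I2: "((\<lambda>t. \<bar>arctan_cos r t\<bar>) has_integral - (P (3*pi/2) - P (pi/2))) {pi/2..3*pi/2}"
  proof (rule has_integral_eq[OF _ has_integral_neg[OF arctan_cos_has_integral[OF r(1)]], folded P_def])
    fix t :: real
    assume "t \<in> {pi/2..3*pi/2}"
    then have "0 \<le> cos (t - pi)"
      by (intro cos_ge_zero) auto
    then show "- arctan_cos r t = \<bar>arctan_cos r t\<bar>"
      by (simp add: neg cos_diff)
  qed auto
  have I3: "((\<lambda>t. \<bar>arctan_cos r t\<bar>) has_integral P (2*pi) - P (3*pi/2)) {3*pi/2..2*pi}"
  proof (rule has_integral_eq[OF _ arctan_cos_has_integral[OF r(1)], folded P_def])
    fix t :: real
    assume "t \<in> {3*pi/2..2*pi}"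
    then have "0 \<le> cos (t - 2*pi)"
      by (intro cos_ge_zero) auto
    then show "arctan_cos r t = \<bar>arctan_cos r t\<bar>"
      by (simp add: pos cos_diff)
  qed auto
  have "((\<lambda>t. \<bar>arctan_cos r t\<bar>) has_integral
      (P (pi/2) - P 0) + - (P (3*pi/2) - P (pi/2)) + (P (2*pi) - P (3*pi/2))) {0..2*pi}"
    using has_integral_combine[OF _ _ has_integral_combine[OF _ _ I1 I2] I3] by simp
  moreover have "P 0 = 0" "P (pi/2) = L" "P (3*pi/2) = - L" "P (2*pi) = 0"
    unfolding P_def L_def
    using arctan_cos_primitive_pi_half arctan_cos_primitive_3pi_half arctan_cos_primitive_2pi r
    by auto
  ultimately show ?thesis
    by (simp add: L_def)
qed

section \<open>The subtended angle and its moments\<close>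

lemma Omega_eq: "Omega t = arctan (4/3 * \<bar>cos t\<bar>)"
proof -
  define c where "c = cos t"
  define s where "s = sin t"
  have cs: "c^2 + s^2 = 1"
    unfolding c_def s_def by simp
  define X where "X = 1 + (4/3 * \<bar>c\<bar>)^2"
  have "(4/3 * \<bar>c\<bar>)^2 = 16/9 * c^2"
    by (simp add: power2_eq_square abs_mult_self_eq)
  then have X: "(5/4 + s) * (5/4 - s) = (3/4)^2 * X"
    unfolding X_def using cs by (simp add: power2_eq_square algebra_simps)
  have "X > 0"
    unfolding X_def by (simp add: add_pos_nonneg)
  have dot: "((0, -1/2) - (c, s)) \<bullet> ((0, 1/2) - (c, s)) = (3/4::real)"
    using cs by (simp add: inner_Pair power2_eq_square algebra_simps)
  have "norm ((0::real, -1/2::real) - (c, s)) = sqrt (5/4 + s)"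
    "norm ((0::real, 1/2::real) - (c, s)) = sqrt (5/4 - s)"
    using cs by (simp_all add: norm_Pair power2_eq_square algebra_simps)
  then have "norm ((0::real, -1/2::real) - (c, s)) * norm ((0::real, 1/2::real) - (c, s))
      = sqrt (5/4 + s) * sqrt (5/4 - s)"
    by simp
  also have "\<dots> = 3/4 * sqrt X"
    by (simp only: X real_sqrt_mult[symmetric]) (simp add: real_sqrt_mult)
  finally have "Omega t = arccos (1 / sqrt X)"
    unfolding Omega_def subtended_angle_def c_def[symmetric] s_def[symmetric] dot
    using \<open>X > 0\<close> by (simp add: field_simps)
  also have "1 / sqrt X = cos (arctan (4/3 * \<bar>c\<bar>))"
    unfolding X_def by (simp add: cos_arctan)
  also have "arccos \<dots> = arctan (4/3 * \<bar>c\<bar>)"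
    using arctan_bounded[of "4/3 * \<bar>c\<bar>"] by (intro arccos_cos) (auto simp: zero_le_arctan_iff)
  finally show ?thesis
    by (simp add: c_def)
qed

lemma Omega_eq_abs_arctan_cos: "Omega t = \<bar>arctan_cos (1/2) t\<bar>"
  by (simp add: Omega_eq arctan_cos_def abs_arctan abs_mult power2_eq_square algebra_simps)

lemma Omega_continuous: "continuous_on UNIV Omega"
  unfolding Omega_eq_abs_arctan_cos by (intro continuous_intros)

lemma expectation_Omega:
  "integral\<^sup>L theta_space Omega = 1 / (3*pi) * (pi^2 - 6 * (ln 2)^2 - 3 * Li2 (1/4))"
proof -
  have "(Omega has_integral 4 * (Li2 (1/2) - Li2 (-1/2))) {0..2*pi}"
    using abs_arctan_cos_has_integral[of "1/2"] by (simp add: Omega_eq_abs_arctan_cos[abs_def])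
  then have "integral\<^sup>L theta_space Omega = 4 * (Li2 (1/2) - Li2 (-1/2)) / (2*pi - 0)"
    unfolding theta_space_def using Omega_continuous
    by (intro integral_uniform_measure_real) (auto simp: Omega_eq borel_measurable_continuous_onI)
  moreover have "Li2 (-1/2) = Li2 (1/4) / 2 - Li2 (1/2)"
    using Li2_duplication[of "1/2"] by (simp add: power2_eq_square)
  ultimately show ?thesis
    by (simp add: Li2_one_half field_simps)
qed

lemma expectation_Omega_squared:
  "integral\<^sup>L theta_space (\<lambda>\<theta>. (Omega \<theta>)^2) = Li2 (1/4) - Li2 (-1/4)"
proof -
  have "((\<lambda>\<theta>. (Omega \<theta>)^2) has_integral 2 * pi * (Li2 (1/4) - Li2 (-1/4))) {0..2*pi}"
    using arctan_cos_squared_has_integral[of "1/2"] by (simp add: Omega_eq_abs_arctan_cos power2_eq_square)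
  then have "integral\<^sup>L theta_space (\<lambda>\<theta>. (Omega \<theta>)^2) = 2 * pi * (Li2 (1/4) - Li2 (-1/4)) / (2*pi - 0)"
    unfolding theta_space_def using Omega_continuous
    by (intro integral_uniform_measure_real) (auto intro!: borel_measurable_continuous_onI continuous_intros)
  then show ?thesis
    by simp
qed

section \<open>The distribution of the subtended angle\<close>

lemma two_arctan_one_half: "2 * arctan (1/2) = arctan (4/3)"
  using arctan_add[of "1/2" "1/2"] by simp

lemma tan_below_arctan:
  fixes w c :: real
  assumes "0 \<le> w" "w < arctan c"
  shows "0 \<le> tan w" "tan w < c" "0 < cos w"
proof -
  have w: "w < pi/2"
    using assms arctan_ubound[of c] by linarith
  show "0 < cos w"
    using assms w by (intro cos_gt_zero_pi) auto
  show "0 \<le> tan w"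
    using assms w tan_gt_zero[of w] by (cases "w = 0") auto
  have "arctan (tan w) = w"
    using assms w by (intro arctan_tan) auto
  then show "tan w < c"
    using assms arctan_less_iff by metis
qed

lemma abs_cos_greater_Ico:
  assumes a: "0 < a" "a \<le> pi/2"
  shows "{t \<in> {0..<2*pi}. cos a < \<bar>cos t\<bar>} = {0..<a} \<union> {pi-a<..<pi+a} \<union> {2*pi-a<..<2*pi}"
proof -
  have lt: "cos a < cos u \<longleftrightarrow> u < a" if "0 \<le> u" "u \<le> pi/2" for u
    using cos_mono_less_eq[of a u] that a by auto
  have "cos a < \<bar>cos t\<bar> \<longleftrightarrow> t \<in> {0..<a} \<union> {pi-a<..<pi+a} \<union> {2*pi-a<..<2*pi}"
    if t: "0 \<le> t" "t < 2*pi" for t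
  proof -
    consider "t \<le> pi/2" | "pi/2 \<le> t" "t \<le> pi" | "pi \<le> t" "t \<le> 3*pi/2" | "3*pi/2 \<le> t"
      by linarith
    then show ?thesis
    proof cases
      case 1
      then have "\<bar>cos t\<bar> = cos t"
        using t by (simp add: cos_ge_zero)
      then show ?thesis
        using lt[of t] t 1 a by auto
    next
      case 2
      then have "\<bar>cos t\<bar> = cos (pi - t)"
        using cos_ge_zero[of "pi - t"] by (simp add: cos_diff)
      then show ?thesis
        using lt[of "pi - t"] t 2 a by auto
    next
      case 3
      then have "\<bar>cos t\<bar> = cos (t - pi)"
        using cos_ge_zero[of "t - pi"] by (simp add: cos_diff)
      then show ?thesis
        using lt[of "t - pi"] t 3 a by auto
    next
      case 4
      then have "\<bar>cos t\<bar> = cos (2*pi - t)"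
        using t cos_ge_zero[of "2*pi - t"] by (simp add: cos_diff)
      then show ?thesis
        using lt[of "2*pi - t"] t 4 a by auto
    qed
  qed
  then show ?thesis
    using a pi_gt_zero by auto
qed

lemma emeasure_abs_cos_greater:
  assumes a: "0 < a" "a \<le> pi/2"
  shows "emeasure lborel {t \<in> {0..<2*pi}. cos a < \<bar>cos t\<bar>} = ennreal (4 * a)"
proof -
  have "emeasure lborel ({0..<a} \<union> {pi-a<..<pi+a} \<union> {2*pi-a<..<2*pi})
      = emeasure lborel ({0..<a} \<union> {pi-a<..<pi+a}) + emeasure lborel {2*pi-a<..<2*pi}"
    by (rule plus_emeasure[symmetric]) (use a in auto)
  also have "emeasure lborel ({0..<a} \<union> {pi-a<..<pi+a})
      = emeasure lborel {0..<a} + emeasure lborel {pi-a<..<pi+a}"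
    by (rule plus_emeasure[symmetric]) (use a in auto)
  also have "emeasure lborel {0..<a} + emeasure lborel {pi-a<..<pi+a} + emeasure lborel {2*pi-a<..<2*pi}
      = ennreal a + ennreal (2 * a) + ennreal a"
    using a by simp
  also have "\<dots> = ennreal (4 * a)"
    using a by (simp flip: ennreal_plus)
  finally show ?thesis
    using abs_cos_greater_Ico[OF a] by simp
qed

lemma sets_theta_space [simp, measurable_cong]: "sets theta_space = sets borel"
  by (simp add: theta_space_def)

lemma space_theta_space [simp]: "space theta_space = UNIV"
  by (simp add: theta_space_def)

lemma prob_space_theta_space: "prob_space theta_space"
  unfolding theta_space_def by (rule prob_space_uniform_measure) auto

lemma Omega_measurable [measurable]: "Omega \<in> borel_measurable borel"
  using Omega_continuous by (rule borel_measurable_continuous_onI)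

lemma Omega_le: "Omega t \<le> arctan (4/3)"
  by (simp add: Omega_eq arctan_le_iff)

lemma tan_below_arctan_four_thirds:
  assumes "0 \<le> w" "w < arctan (4/3)"
  shows "0 < 16 - 9 * (tan w)^2" "0 \<le> 3/4 * tan w" "3/4 * tan w < 1" "0 < cos w"
proof -
  note tan = tan_below_arctan[OF assms]
  then have "(3 * tan w)^2 < 4^2"
    by (intro power_strict_mono) auto
  then show "0 < 16 - 9 * (tan w)^2"
    by (simp add: power_mult_distrib)
  show "0 \<le> 3/4 * tan w" "3/4 * tan w < 1" "0 < cos w"
    using tan by auto
qed

definition Omega_density :: "real \<Rightarrow> real" where
  "Omega_density w = 6/pi * (1 / ((cos w)^2 * sqrt (16 - 9 * (tan w)^2)))"

lemma Omega_density_nonneg: "0 \<le> w \<Longrightarrow> w < arctan (4/3) \<Longrightarrow> 0 \<le> Omega_density w"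
  using tan_below_arctan_four_thirds[of w] by (simp add: Omega_density_def)

lemma isCont_Omega_density: "0 \<le> w \<Longrightarrow> w < arctan (4/3) \<Longrightarrow> isCont Omega_density w"
  using tan_below_arctan_four_thirds[of w] unfolding Omega_density_def
  by (auto intro!: continuous_intros simp: tan_def)

lemma Omega_density_measurable [measurable]: "Omega_density \<in> borel_measurable borel"
  unfolding Omega_density_def tan_def by measurable

lemma arccos_tan_has_real_derivative:
  assumes "0 \<le> w" "w < arctan (4/3)"
  shows "((\<lambda>w. - (2/pi) * arccos (3/4 * tan w)) has_real_derivative Omega_density w) (at w)"
proof -
  define u where "u = 3/4 * tan w"
  note bounds = tan_below_arctan_four_thirds[OF assms, folded u_def]
  have "((\<lambda>w. - (2/pi) * arccos (3/4 * tan w)) has_real_derivative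
      - (2/pi) * (inverse (- sqrt (1 - u^2)) * (3/4 * inverse ((cos w)^2)))) (at w)"
    using bounds unfolding u_def
    by (auto intro!: derivative_eq_intros DERIV_chain2[OF DERIV_arccos])
  moreover have "sqrt (16 - 9 * (tan w)^2) = 4 * sqrt (1 - u^2)"
  proof -
    have "16 - 9 * (tan w)^2 = 4^2 * (1 - u^2)"
      by (simp add: u_def power2_eq_square)
    then show ?thesis
      by (simp only: real_sqrt_mult real_sqrt_abs abs_numeral)
  qed
  moreover have "0 < sqrt (1 - u^2)"
    using bounds by (simp add: abs_square_less_1)
  ultimately show ?thesis
    using bounds by (simp add: Omega_density_def field_simps)
qed

lemma arccos_tan_tendsto_at_left:
  "((\<lambda>w. arccos (3/4 * tan w)) \<longlongrightarrow> arccos 1) (at_left (arctan (4/3)))"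
proof -
  have "((\<lambda>w. 3/4 * tan w) \<longlongrightarrow> 3/4 * tan (arctan (4/3))) (at_left (arctan (4/3)))"
    using arctan_ubound[of "4/3"] arctan_lbound[of "4/3"]
    by (intro tendsto_intros) (auto simp: cos_arctan_not_zero)
  then have "((\<lambda>w. 3/4 * tan w) \<longlongrightarrow> 1) (at_left (arctan (4/3)))"
    by (simp add: tan_arctan)
  moreover have "eventually (\<lambda>w. 3/4 * tan w \<in> {-1..1}) (at_left (arctan (4/3)))"
  proof (rule eventually_at_leftI[of 0])
    show "3/4 * tan w \<in> {-1..1}" if "w \<in> {0<..<arctan (4/3)}" for w
      using that tan_below_arctan_four_thirds(2,3)[of w] by simp
  qed (use arctan_lbound[of "4/3"] in auto)
  ultimately show ?thesis
    by (intro continuous_on_tendsto_compose[OF continuous_on_arccos']) auto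
qed

lemma nn_integral_Omega_density:
  assumes "0 \<le> y" "y < arctan (4/3)"
  shows "(\<integral>\<^sup>+t. ennreal (indicator {y<..<arctan (4/3)} t * Omega_density t) \<partial>lborel)
    = ennreal (2/pi * arccos (3/4 * tan y))"
proof -
  define U where "U = arctan (4/3::real)"
  define F where "F w = - (2/pi) * arccos (3/4 * tan w)" for w
  have yU: "ereal y < ereal U"
    using assms by (simp add: U_def)
  have deriv: "(F has_real_derivative Omega_density w) (at w)" if "ereal y < ereal w" "ereal w < ereal U" for w
    using that assms unfolding F_def U_def by (intro arccos_tan_has_real_derivative) auto
  have cont: "isCont Omega_density w" if "ereal y < ereal w" "ereal w < ereal U" for w
    using that assms unfolding U_def by (intro isCont_Omega_density) auto
  have nonneg: "AE w in lborel. ereal y < ereal w \<longrightarrow> ereal w < ereal U \<longrightarrow> 0 \<le> Omega_density w"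
    using assms by (auto simp: U_def intro!: Omega_density_nonneg)
  have "isCont F y"
    using tan_below_arctan_four_thirds[OF assms] unfolding F_def
    by (auto intro!: continuous_intros isCont_arccos[THEN isCont_o2[rotated]] isCont_tan)
  then have lim_y: "((F \<circ> real_of_ereal) \<longlongrightarrow> F y) (at_right (ereal y))"
    by (simp add: ereal_tendsto_simps1 isCont_def filterlim_at_split)
  have "((\<lambda>w. arccos (3/4 * tan w)) \<longlongrightarrow> arccos 1) (at_left U)"
    unfolding U_def by (rule arccos_tan_tendsto_at_left)
  then have "(F \<longlongrightarrow> - (2/pi) * arccos 1) (at_left U)"
    unfolding F_def by (intro tendsto_intros)
  then have "(F \<longlongrightarrow> 0) (at_left U)"
    by simp
  then have lim_U: "((F \<circ> real_of_ereal) \<longlongrightarrow> 0) (at_left (ereal U))"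
    by (simp add: ereal_tendsto_simps1)
  note FTC = interval_integral_FTC_nonneg[OF yU deriv cont nonneg lim_y lim_U]
  have "(\<integral>\<^sup>+t. ennreal (indicator {y<..<U} t * Omega_density t) \<partial>lborel)
      = ennreal (LINT t:{y<..<U}|lborel. Omega_density t)"
    using FTC(1) assms unfolding set_integrable_def set_lebesgue_integral_def
    by (subst nn_integral_eq_integral[symmetric]) (auto simp: U_def Omega_density_nonneg indicator_def)
  also have "(LINT t:{y<..<U}|lborel. Omega_density t) = 0 - F y"
    using FTC(2) interval_lebesgue_integral_le_eq[of "ereal y" "ereal U" lborel Omega_density] yU by simp
  finally show ?thesis
    by (simp add: U_def F_def)
qed

lemma emeasure_Omega_greater:
  assumes x: "0 \<le> x" "x < arctan (4/3)"
  shows "emeasure lborel {t \<in> {0..<2*pi}. x < Omega t} = ennreal (4 * arccos (3/4 * tan x))"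
proof -
  define a where "a = arccos (3/4 * tan x)"
  note bounds = tan_below_arctan_four_thirds[OF x]
  have cos_a: "cos a = 3/4 * tan x"
    unfolding a_def using bounds by (intro cos_arccos) auto
  have a: "0 < a" "a \<le> pi/2"
    unfolding a_def using bounds arccos_lt_bounded[of "3/4 * tan x"] arccos_le_pi2[of "3/4 * tan x"]
    by auto
  have "x < Omega t \<longleftrightarrow> cos a < \<bar>cos t\<bar>" for t
  proof -
    have "x = arctan (tan x)"
      using x arctan_ubound[of "4/3"] by (intro arctan_tan[symmetric]) auto
    then have "x < Omega t \<longleftrightarrow> tan x < 4/3 * \<bar>cos t\<bar>"
      by (metis Omega_eq arctan_less_iff)
    then show ?thesis
      unfolding cos_a by auto
  qed
  then show ?thesis
    using emeasure_abs_cos_greater[OF a] by (simp add: a_def)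
qed

text \<open>The tail \<open>P (\<Omega> > x)\<close>; for \<open>x \<le> 0\<close> it equals \<open>2/\<pi> arccos 0 = 1\<close>.\<close>

definition Omega_tail :: "real \<Rightarrow> real" where
  "Omega_tail x = (if arctan (4/3) \<le> x then 0 else 2/pi * arccos (3/4 * tan (max x 0)))"

lemma emeasure_distr_Omega_greaterThan:
  "emeasure (distr theta_space lborel Omega) {x<..} = ennreal (Omega_tail x)"
proof -
  have "emeasure (distr theta_space lborel Omega) {x<..} = emeasure theta_space {t. x < Omega t}"
    by (subst emeasure_distr) (auto simp: vimage_def)
  also have "\<dots> = emeasure lborel {t \<in> {0..<2*pi}. x < Omega t} / ennreal (2*pi)"
    unfolding theta_space_def by (subst emeasure_uniform_measure) (auto simp: Int_def conj_commute)
  also have "\<dots> = ennreal (Omega_tail x)"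
  proof (cases "arctan (4/3) \<le> x")
    case True
    then have empty: "{t \<in> {0..<2*pi}. x < Omega t} = {}"
      using Omega_le order.trans not_less by blast
    show ?thesis
      using True unfolding empty by (simp add: Omega_tail_def)
  next
    case x_lt: False
    show ?thesis
    proof (cases "x < 0")
      case True
      then have "{t \<in> {0..<2*pi}. x < Omega t} = {0..<2*pi}"
        by (auto simp: Omega_eq_abs_arctan_cos)
      with True x_lt show ?thesis
        by (simp add: Omega_tail_def ennreal_divide_self)
    next
      case False
      then have x: "0 \<le> x" "x < arctan (4/3)"
        using x_lt by auto
      have "0 \<le> arccos (3/4 * tan x)"
        using tan_below_arctan_four_thirds[OF x] by (intro arccos_lbound) auto
      then have "ennreal (4 * arccos (3/4 * tan x)) / ennreal (2*pi) = ennreal (2/pi * arccos (3/4 * tan x))"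
        by (subst divide_ennreal) (auto simp: field_simps)
      then show ?thesis
        using emeasure_Omega_greater[OF x] x by (simp add: Omega_tail_def)
    qed
  qed
  finally show ?thesis .
qed

lemma emeasure_density_Omega_greaterThan:
  "emeasure (density lborel (\<lambda>w. ennreal (indicator {0<..<arctan (4/3)} w * Omega_density w))) {x<..}
    = ennreal (Omega_tail x)"
proof -
  have "emeasure (density lborel (\<lambda>w. ennreal (indicator {0<..<arctan (4/3)} w * Omega_density w))) {x<..}
      = (\<integral>\<^sup>+t. ennreal (indicator {0<..<arctan (4/3)} t * Omega_density t) * indicator {x<..} t \<partial>lborel)"
    by (rule emeasure_density) auto
  also have "\<dots> = ennreal (Omega_tail x)"
  proof (cases "arctan (4/3) \<le> x")
    case True
    have "(\<integral>\<^sup>+t. ennreal (indicator {0<..<arctan (4/3)} t * Omega_density t) * indicator {x<..} t \<partial>lborel)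
        = (\<integral>\<^sup>+t. 0 \<partial>(lborel :: real measure))"
    proof (rule nn_integral_cong)
      show "ennreal (indicator {0<..<arctan (4/3)} t * Omega_density t) * indicator {x<..} t = 0" for t
        using True by (simp add: indicator_def)
    qed
    with True show ?thesis
      by (simp add: Omega_tail_def)
  next
    case False
    define y where "y = max x 0"
    have y: "0 \<le> y" "y < arctan (4/3)"
      using False arctan_lbound[of "4/3"] by (auto simp: y_def)
    have "(\<integral>\<^sup>+t. ennreal (indicator {0<..<arctan (4/3)} t * Omega_density t) * indicator {x<..} t \<partial>lborel)
        = (\<integral>\<^sup>+t. ennreal (indicator {y<..<arctan (4/3)} t * Omega_density t) \<partial>lborel)"
      by (intro nn_integral_cong) (auto simp: indicator_def y_def)
    also have "\<dots> = ennreal (2/pi * arccos (3/4 * tan y))"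
      by (rule nn_integral_Omega_density[OF y])
    finally show ?thesis
      using False by (simp add: Omega_tail_def y_def)
  qed
  finally show ?thesis .
qed

lemma distributed_Omega:
  "distributed theta_space lborel Omega (\<lambda>w. ennreal (indicator {0<..<arctan (4/3)} w * Omega_density w))"
  unfolding distributed_def
proof (intro conjI)
  show "distr theta_space lborel Omega = density lborel (\<lambda>w. ennreal (indicator {0<..<arctan (4/3)} w * Omega_density w))"
  proof (rule measure_eqI_lessThan)
    interpret prob_space "distr theta_space lborel Omega"
      by (rule prob_space.prob_space_distr[OF prob_space_theta_space]) simp
    show "emeasure (distr theta_space lborel Omega) {x<..} < \<infinity>" for x
      using emeasure_le_1[of "{x<..}"] by (auto intro: le_less_trans)
  qed (simp_all add: emeasure_distr_Omega_greaterThan emeasure_density_Omega_greaterThan)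
qed simp_all

theorem mainTheorem5:
  shows "(\<forall>\<theta>. Omega \<theta> = arctan (4/3 * \<bar>cos \<theta>\<bar>))
    \<and> integral\<^sup>L theta_space Omega
        = 1 / (3*pi) * (pi^2 - 6 * (ln 2)^2 - 3 * Li2 (1/4))
    \<and> integral\<^sup>L theta_space (\<lambda>\<theta>. (Omega \<theta>)^2) = Li2 (1/4) - Li2 (-1/4)
    \<and> distributed theta_space lborel Omega
        (\<lambda>\<omega>. ennreal (indicator {0<..<2 * arctan (1/2)} \<omega> *
              (6/pi * (1 / ((cos \<omega>)^2 * sqrt (16 - 9 * (tan \<omega>)^2))))))"
proof -
  have "distributed theta_space lborel Omega
      (\<lambda>\<omega>. ennreal (indicator {0<..<2 * arctan (1/2)} \<omega> *
            (6/pi * (1 / ((cos \<omega>)^2 * sqrt (16 - 9 * (tan \<omega>)^2))))))"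
    using distributed_Omega by (simp add: two_arctan_one_half Omega_density_def)
  then show ?thesis
    using Omega_eq expectation_Omega expectation_Omega_squared by blast
qed

end
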